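(* Let $X$ be a countably infinite set and $W=\mathbb R^X$. Then (1) the relation $\blacktriangleright$ on $W$ is a preorder satisfying Strong Pareto, Permutation Invariance, and Quasi-Independence; and (2) $\blacktriangleright$ weakly extends $\succeq_{SP}$ and is strictly larger than it: there exist $w,v\in W$ with $w\blacktriangleright v$ but not $w\succeq_{SP} v$.
   Context: Addition and scalar multiplication of worlds are pointwise. For a preorder $\succeq$, $w\succ v$ means $w\succeq v$ and not $v\succeq w$. For a permutation $\pi$ of $X$, $\pi(w)(x)=w(\pi(x))$. Strong Pareto: for all $w,v\in W$, if $w(x)\ge v(x)$ for all $x$ and $w(x)>v(x)$ for some $x$, then $w\succ v$. Permutation Invariance: for all $w,v\in W$ and every permutation $\pi$ of $X$, $w\succeq v$ iff $\pi(w)\succeq\pi(v)$. Quasi-Independence: for all $w,v,u\in W$, if $w\succeq v$ then for every $\alpha\in[0,1]$, $\alpha w+(1-\alpha)u\succeq \alpha v+(1-\alpha)u$. A series $\sum_{x\in X}a_x$ converges unconditionally (diverges unconditionally to $+\infty$) if it converges to the same value (diverges to $+\infty$) under every enumeration of $X$. Sum Preorder: $w\succeq_{SP} v$ iff $\sum_{x\in X}(w(x)-v(x))$ converges unconditionally to some $r\ge 0$ or diverges unconditionally to $+\infty$. Relation $\blacktriangleright$: $w\blacktriangleright v$ iff either (i) $w\succeq_{SP} v$, or (ii) all of: (a) not $w\succeq_{SP} v$; (b) there exist $c>0$ and an infinite $A\subseteq X$ with $w(x)-v(x)>c$ for all $x\in A$; (c) there do not exist $d>0$ and an infinite $B\subseteq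 X$ with $v(x)-w(x)>d$ for all $x\in B$. A relation $\succeq$ weakly extends $\succeq'$ if $w\succeq' v$ implies $w\succeq v$. *)

theory Defs
  imports "HOL-Analysis.Analysis"
begin

definition conv_uncond :: "('x \<Rightarrow> real) \<Rightarrow> real \<Rightarrow> bool" where
  "conv_uncond a r \<longleftrightarrow>
     (\<forall>e :: nat \<Rightarrow> 'x. bij e \<longrightarrow> (\<lambda>n. \<Sum>i<n. a (e i)) \<longlonglongrightarrow> r)"

definition div_uncond_top :: "('x \<Rightarrow> real) \<Rightarrow> bool" where
  "div_uncond_top a \<longleftrightarrow>
     (\<forall>e :: nat \<Rightarrow> 'x. bij e \<longrightarrow> filterlim (\<lambda>n. \<Sum>i<n. a (e i)) at_top sequentially)"

definition sum_preorder :: "('x \<Rightarrow> real) \<Rightarrow> ('x \<Rightarrow> real) \<Rightarrow> bool" where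
  "sum_preorder w v \<longleftrightarrow>
     (\<exists>r\<ge>0. conv_uncond (\<lambda>x. w x - v x) r) \<or> div_uncond_top (\<lambda>x. w x - v x)"

definition btri :: "('x \<Rightarrow> real) \<Rightarrow> ('x \<Rightarrow> real) \<Rightarrow> bool" where
  "btri w v \<longleftrightarrow> sum_preorder w v \<or>
     (\<not> sum_preorder w v \<and>
      (\<exists>c>0. \<exists>A. infinite A \<and> (\<forall>x\<in>A. w x - v x > c)) \<and>
      \<not> (\<exists>d>0. \<exists>B. infinite B \<and> (\<forall>x\<in>B. v x - w x > d)))"

definition strict_of :: "('w \<Rightarrow> 'w \<Rightarrow> bool) \<Rightarrow> 'w \<Rightarrow> 'w \<Rightarrow> bool" where
  "strict_of R w v \<longleftrightarrow> R w v \<and> \<not> R v w"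

definition is_preorder :: "('w \<Rightarrow> 'w \<Rightarrow> bool) \<Rightarrow> bool" where
  "is_preorder R \<longleftrightarrow> (\<forall>w. R w w) \<and> (\<forall>u v w. R u v \<longrightarrow> R v w \<longrightarrow> R u w)"

definition strong_pareto :: "(('x \<Rightarrow> real) \<Rightarrow> ('x \<Rightarrow> real) \<Rightarrow> bool) \<Rightarrow> bool" where
  "strong_pareto R \<longleftrightarrow> (\<forall>w v. (\<forall>x. w x \<ge> v x) \<and> (\<exists>x. w x > v x) \<longrightarrow> strict_of R w v)"

definition permutation_invariance :: "(('x \<Rightarrow> real) \<Rightarrow> ('x \<Rightarrow> real) \<Rightarrow> bool) \<Rightarrow> bool" where
  "permutation_invariance R \<longleftrightarrow>
     (\<forall>w v (\<pi> :: 'x \<Rightarrow> 'x). bij \<pi> \<longrightarrow> (R w v \<longleftrightarrow> R (w \<circ> \<pi>) (v \<circ> \<pi>)))"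

definition quasi_independence :: "(('x \<Rightarrow> real) \<Rightarrow> ('x \<Rightarrow> real) \<Rightarrow> bool) \<Rightarrow> bool" where
  "quasi_independence R \<longleftrightarrow>
     (\<forall>w v u. R w v \<longrightarrow> (\<forall>\<alpha>::real. 0 \<le> \<alpha> \<and> \<alpha> \<le> 1 \<longrightarrow>
        R (\<lambda>x. \<alpha> * w x + (1 - \<alpha>) * u x) (\<lambda>x. \<alpha> * v x + (1 - \<alpha>) * u x)))"

definition weakly_extends :: "('w \<Rightarrow> 'w \<Rightarrow> bool) \<Rightarrow> ('w \<Rightarrow> 'w \<Rightarrow> bool) \<Rightarrow> bool" where
  "weakly_extends R R' \<longleftrightarrow> (\<forall>w v. R' w v \<longrightarrow> R w v)"

end

theory Submission
  imports Defs
begin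

text \<open>Both relations depend only on the difference \<open>a = w - v\<close>. The central fact is that
  an unconditionally nonnegative sum of \<open>a\<close> (convergent to some \<open>r \<ge> 0\<close>, or divergent
  to \<open>+\<infinity>\<close>) leaves, for every \<open>\<epsilon> > 0\<close>, only finitely many terms below \<open>-\<epsilon>\<close>: for a
  convergent sum the terms tend to \<open>0\<close>, and for a divergent one infinitely many terms below
  \<open>-\<epsilon>\<close> could be interleaved with the others so that the partial sums return to \<open>\<le> 0\<close>
  infinitely often. Hence every difference related by \<open>\<blacktriangleright>\<close> has no uniformly negative
  infinite part, and this makes the relation closed under sums of differences, which is
  transitivity; the other axioms follow from invariance under positive scaling and
  reindexing. A strictly larger relation is witnessed by a series that adds \<open>+1\<close> whenever its
  running sum is negative and otherwise subtracts harmonic terms: its partial sums stay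
  bounded without converging, yet it has infinitely many terms equal to \<open>1\<close>.\<close>

section \<open>Reduction to differences\<close>

definition uncond_sum_nonneg :: "('x \<Rightarrow> real) \<Rightarrow> bool" where
  "uncond_sum_nonneg a \<longleftrightarrow> (\<exists>r\<ge>0. conv_uncond a r) \<or> div_uncond_top a"

definition pos_inf_often :: "('x \<Rightarrow> real) \<Rightarrow> bool" where
  "pos_inf_often a \<longleftrightarrow> (\<exists>c>0. \<exists>A. infinite A \<and> (\<forall>x\<in>A. a x > c))"

text \<open>For \<open>a = w - v\<close>, \<open>pos_inf_often a\<close> is condition (b) and \<open>pos_inf_often (- a)\<close> the
  negation of (c); the redundant condition (a) is dropped.\<close>

definition btri_diff :: "('x \<Rightarrow> real) \<Rightarrow> bool" where
  "btri_diff a \<longleftrightarrow> uncond_sum_nonneg a \<or> (pos_inf_often a \<and> \<not> pos_inf_often (\<lambda>x. - a x))"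

lemma sum_preorder_iff_diff: "sum_preorder w v \<longleftrightarrow> uncond_sum_nonneg (\<lambda>x. w x - v x)"
  by (simp add: sum_preorder_def uncond_sum_nonneg_def)

lemma btri_iff_diff: "btri w v \<longleftrightarrow> btri_diff (\<lambda>x. w x - v x)"
  by (auto simp: btri_def btri_diff_def sum_preorder_iff_diff pos_inf_often_def)

lemma bij_from_nat_into_UNIV:
  "infinite (UNIV :: 'x::countable set) \<Longrightarrow> bij (from_nat_into (UNIV :: 'x set))"
  by (simp add: bij_betw_from_nat_into)

lemma conv_uncond_comp_bij:
  fixes p :: "'x \<Rightarrow> 'y"
  assumes "bij p" "conv_uncond a r"
  shows "conv_uncond (a \<circ> p) r"
  using assms bij_comp[of _ p] unfolding conv_uncond_def by (simp add: comp_def) blast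

lemma div_uncond_top_comp_bij:
  fixes p :: "'x \<Rightarrow> 'y"
  assumes "bij p" "div_uncond_top a"
  shows "div_uncond_top (a \<circ> p)"
  using assms bij_comp[of _ p] unfolding div_uncond_top_def by (simp add: comp_def) blast

lemma uncond_sum_nonneg_comp_bij:
  "bij p \<Longrightarrow> uncond_sum_nonneg a \<Longrightarrow> uncond_sum_nonneg (a \<circ> p)"
  unfolding uncond_sum_nonneg_def using conv_uncond_comp_bij div_uncond_top_comp_bij by blast

lemma pos_inf_often_comp_bij:
  assumes "bij p"
  shows "pos_inf_often (a \<circ> p) \<longleftrightarrow> pos_inf_often a"
proof
  assume "pos_inf_often (a \<circ> p)"
  then obtain c A where "c > 0" "infinite A" "\<forall>x\<in>A. a (p x) > c"
    unfolding pos_inf_often_def by auto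
  moreover have "infinite (p ` A)"
    using \<open>infinite A\<close> assms by (meson bij_is_inj finite_imageD inj_on_subset subset_UNIV)
  ultimately show "pos_inf_often a"
    unfolding pos_inf_often_def by blast
next
  assume "pos_inf_often a"
  then obtain c A where "c > 0" "infinite A" "\<forall>x\<in>A. a x > c"
    unfolding pos_inf_often_def by auto
  moreover have "infinite (p -` A)"
    using \<open>infinite A\<close> assms by (meson bij_is_surj finite_vimageD)
  ultimately show "pos_inf_often (a \<circ> p)"
    unfolding pos_inf_often_def by auto
qed

lemma btri_diff_comp_bij:
  assumes "bij p" "btri_diff a"
  shows "btri_diff (a \<circ> p)"
proof -
  have "(\<lambda>x. - (a \<circ> p) x) = (\<lambda>x. - a x) \<circ> p"
    by auto
  then show ?thesis
    using assms uncond_sum_nonneg_comp_bij pos_inf_often_comp_bij unfolding btri_diff_def by metis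
qed

lemma btri_diff_comp_bij_iff:
  assumes "bij p"
  shows "btri_diff (a \<circ> p) \<longleftrightarrow> btri_diff a"
proof
  assume "btri_diff (a \<circ> p)"
  then have "btri_diff (a \<circ> p \<circ> inv p)"
    using btri_diff_comp_bij bij_imp_bij_inv[OF assms] by blast
  moreover have "a \<circ> p \<circ> inv p = a"
    using assms by (metis bij_is_surj surj_iff comp_assoc comp_id)
  ultimately show "btri_diff a"
    by simp
qed (use assms btri_diff_comp_bij in blast)

lemma uncond_sum_nonneg_zero: "uncond_sum_nonneg (\<lambda>x. 0)"
proof -
  have "conv_uncond (\<lambda>x. 0) 0"
    by (simp add: conv_uncond_def)
  then show ?thesis
    unfolding uncond_sum_nonneg_def by blast
qed

lemma uncond_sum_nonneg_scale:
  assumes "c \<ge> 0" "uncond_sum_nonneg a"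
  shows "uncond_sum_nonneg (\<lambda>x. c * a x)"
proof (cases "c = 0")
  case True
  then show ?thesis
    using uncond_sum_nonneg_zero by simp
next
  case False
  then have "c > 0"
    using assms(1) by simp
  have "conv_uncond (\<lambda>x. c * a x) (c * r)" if "conv_uncond a r" for r
    using that unfolding conv_uncond_def by (simp add: sum_distrib_left[symmetric] tendsto_mult_left)
  moreover have "div_uncond_top (\<lambda>x. c * a x)" if "div_uncond_top a"
    using that \<open>c > 0\<close> unfolding div_uncond_top_def
    by (simp add: sum_distrib_left[symmetric] filterlim_tendsto_pos_mult_at_top[OF tendsto_const])
  ultimately show ?thesis
    using assms unfolding uncond_sum_nonneg_def by (meson mult_nonneg_nonneg)
qed

lemma pos_inf_often_scale:
  assumes "c > 0"
  shows "pos_inf_often (\<lambda>x. c * a x) \<longleftrightarrow> pos_inf_often a"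
proof
  assume "pos_inf_often (\<lambda>x. c * a x)"
  then obtain d A where "d > 0" "infinite A" "\<forall>x\<in>A. c * a x > d"
    unfolding pos_inf_often_def by auto
  moreover have "c * a x > d \<Longrightarrow> a x > d / c" for x
    using assms by (simp add: field_simps)
  ultimately show "pos_inf_often a"
    unfolding pos_inf_often_def using assms by (meson divide_pos_pos)
next
  assume "pos_inf_often a"
  then obtain d A where "d > 0" "infinite A" "\<forall>x\<in>A. a x > d"
    unfolding pos_inf_often_def by auto
  then show "pos_inf_often (\<lambda>x. c * a x)"
    unfolding pos_inf_often_def using assms by (metis mult_pos_pos mult_strict_left_mono)
qed

lemma btri_diff_scale:
  assumes "c \<ge> 0" "btri_diff a"
  shows "btri_diff (\<lambda>x. c * a x)"
proof (cases "c = 0")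
  case True
  then show ?thesis
    using uncond_sum_nonneg_zero by (simp add: btri_diff_def)
next
  case False
  then have "c > 0"
    using assms(1) by simp
  have "pos_inf_often (\<lambda>x. - (c * a x)) \<longleftrightarrow> pos_inf_often (\<lambda>x. - a x)"
    using pos_inf_often_scale[OF \<open>c > 0\<close>, of "\<lambda>x. - a x"] by simp
  then show ?thesis
    using assms uncond_sum_nonneg_scale pos_inf_often_scale[OF \<open>c > 0\<close>]
    unfolding btri_diff_def by blast
qed

lemma conv_uncond_add:
  "conv_uncond a r \<Longrightarrow> conv_uncond b s \<Longrightarrow> conv_uncond (\<lambda>x. a x + b x) (r + s)"
  unfolding conv_uncond_def sum.distrib by (simp add: tendsto_add)

lemma conv_uncond_add_div_uncond_top:
  "conv_uncond a r \<Longrightarrow> div_uncond_top b \<Longrightarrow> div_uncond_top (\<lambda>x. a x + b x)"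
  unfolding conv_uncond_def div_uncond_top_def sum.distrib by (auto intro: filterlim_tendsto_add_at_top)

lemma div_uncond_top_add:
  "div_uncond_top a \<Longrightarrow> div_uncond_top b \<Longrightarrow> div_uncond_top (\<lambda>x. a x + b x)"
  unfolding div_uncond_top_def sum.distrib by (simp add: filterlim_at_top_add_at_top)

lemma uncond_sum_nonneg_add:
  assumes "uncond_sum_nonneg a" "uncond_sum_nonneg b"
  shows "uncond_sum_nonneg (\<lambda>x. a x + b x)"
  using assms conv_uncond_add_div_uncond_top[of a _ b] conv_uncond_add_div_uncond_top[of b _ a]
    conv_uncond_add[of a _ b] div_uncond_top_add[of a b]
  unfolding uncond_sum_nonneg_def by (auto simp: add.commute intro: add_nonneg_nonneg)

lemma pos_inf_often_add:
  assumes "pos_inf_often a" "\<not> pos_inf_often (\<lambda>x. - b x)"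
  shows "pos_inf_often (\<lambda>x. a x + b x)"
proof -
  obtain c A where c: "c > 0" "infinite A" "\<forall>x\<in>A. a x > c"
    using assms(1) unfolding pos_inf_often_def by auto
  let ?E = "{x\<in>A. - b x > c / 2}"
  have "finite ?E"
    using assms(2) c(1) unfolding pos_inf_often_def by (metis (mono_tags) half_gt_zero mem_Collect_eq)
  then have "infinite (A - ?E)"
    using c(2) by simp
  moreover have "\<forall>x\<in>A - ?E. a x + b x > c / 2"
    using c(3) by fastforce
  ultimately show ?thesis
    unfolding pos_inf_often_def using c(1) half_gt_zero by blast
qed

lemma not_pos_inf_often_add:
  assumes "\<not> pos_inf_often a" "\<not> pos_inf_often b"
  shows "\<not> pos_inf_often (\<lambda>x. a x + b x)"
proof
  assume "pos_inf_often (\<lambda>x. a x + b x)"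
  then obtain c C where c: "c > 0" "infinite C" "\<forall>x\<in>C. a x + b x > c"
    unfolding pos_inf_often_def by auto
  have "C \<subseteq> {x\<in>C. a x > c / 2} \<union> {x\<in>C. b x > c / 2}"
    using c(3) by force
  then have "infinite {x\<in>C. a x > c / 2} \<or> infinite {x\<in>C. b x > c / 2}"
    using c(2) finite_subset by auto
  then show False
    using assms c(1) unfolding pos_inf_often_def by (metis (mono_tags) half_gt_zero mem_Collect_eq)
qed

lemma uncond_sum_nonneg_of_nonneg:
  assumes "\<And>x. a x \<ge> 0"
  shows "uncond_sum_nonneg a"
proof (cases "a summable_on UNIV")
  case True
  have "(\<lambda>n. \<Sum>i<n. a (e i)) \<longlonglongrightarrow> infsum a UNIV" if "bij e" for e
  proof -
    have "((a \<circ> e) has_sum infsum a UNIV) UNIV"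
      using True that by (simp add: bij_is_inj bij_is_surj flip: has_sum_reindex)
    then show ?thesis
      using has_sum_imp_sums by (fastforce simp: sums_def)
  qed
  moreover have "infsum a UNIV \<ge> 0"
    using assms by (simp add: infsum_nonneg)
  ultimately show ?thesis
    unfolding uncond_sum_nonneg_def conv_uncond_def by blast
next
  case False
  have "filterlim (\<lambda>n. \<Sum>i<n. a (e i)) at_top sequentially" if "bij e" for e
    unfolding filterlim_at_top eventually_sequentially
  proof
    fix Z
    have "\<not> summable (a \<circ> e)"
      using False that assms
      by (metis bij_is_inj bij_is_surj summable_on_UNIV_nonneg_real_iff summable_on_reindex comp_apply)
    moreover have "summable (a \<circ> e)" if "\<And>n. (\<Sum>i<n. a (e i)) \<le> Z"
      using that assms by (intro summableI_nonneg_bounded) auto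
    ultimately obtain N where "(\<Sum>i<N. a (e i)) > Z"
      by (meson not_le)
    moreover have "(\<Sum>i<N. a (e i)) \<le> (\<Sum>i<n. a (e i))" if "n \<ge> N" for n
      using that assms by (intro sum_mono2) auto
    ultimately show "\<exists>N. \<forall>n\<ge>N. Z \<le> (\<Sum>i<n. a (e i))"
      by (meson less_imp_le order_trans)
  qed
  then show ?thesis
    unfolding uncond_sum_nonneg_def div_uncond_top_def by blast
qed

lemma not_uncond_sum_nonneg_of_nonpos:
  assumes "infinite (UNIV :: 'x::countable set)" "\<And>x. a x \<le> 0" "(a :: 'x \<Rightarrow> real) x\<^sub>0 < 0"
  shows "\<not> uncond_sum_nonneg a"
proof -
  let ?e = "from_nat_into (UNIV :: 'x set)"
  have e: "bij ?e"
    using assms(1) by (rule bij_from_nat_into_UNIV)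
  obtain n\<^sub>0 where n\<^sub>0: "?e n\<^sub>0 = x\<^sub>0"
    using e by (metis bij_is_surj surj_f_inv_f)
  have "(\<Sum>i<n. a (?e i)) \<le> a x\<^sub>0" if "n > n\<^sub>0" for n
  proof -
    have "(\<Sum>i<n. a (?e i)) = a (?e n\<^sub>0) + (\<Sum>i\<in>{..<n} - {n\<^sub>0}. a (?e i))"
      using that by (simp add: sum.remove)
    also have "\<dots> \<le> a x\<^sub>0"
      using assms(2) n\<^sub>0 by (simp add: sum_nonpos)
    finally show ?thesis .
  qed
  then have below: "eventually (\<lambda>n. (\<Sum>i<n. a (?e i)) \<le> a x\<^sub>0) sequentially"
    unfolding eventually_sequentially by (metis Suc_le_lessD)
  have "\<not> (\<lambda>n. \<Sum>i<n. a (?e i)) \<longlonglongrightarrow> r" if "r \<ge> 0" for r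
    using tendsto_upperbound[OF _ below] that assms(3) by fastforce
  moreover have "\<not> filterlim (\<lambda>n. \<Sum>i<n. a (?e i)) at_top sequentially"
  proof
    assume "filterlim (\<lambda>n. \<Sum>i<n. a (?e i)) at_top sequentially"
    then have "eventually (\<lambda>n. 0 \<le> (\<Sum>i<n. a (?e i))) sequentially"
      by (simp add: filterlim_at_top)
    with below have "eventually (\<lambda>n. False) sequentially"
      by eventually_elim (use assms(3) in linarith)
    then show False
      by simp
  qed
  ultimately show ?thesis
    unfolding uncond_sum_nonneg_def conv_uncond_def div_uncond_top_def using e by blast
qed

lemma not_pos_inf_often_if_dominated:
  assumes "bij e" "\<And>n. a (e n) \<le> f n" "f \<longlonglongrightarrow> 0"
  shows "\<not> pos_inf_often a"
proof
  assume "pos_inf_often a"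
  then obtain c A where c: "c > 0" "infinite A" "\<forall>x\<in>A. a x > c"
    unfolding pos_inf_often_def by auto
  obtain N where N: "\<And>n. n \<ge> N \<Longrightarrow> f n < c"
    using order_tendstoD(2)[OF assms(3) c(1)] by (auto simp: eventually_sequentially)
  have "infinite (e -` A)"
    using c(2) assms(1) by (meson bij_is_surj finite_vimageD)
  then obtain n where "n \<ge> N" "e n \<in> A"
    by (meson infinite_nat_iff_unbounded_le vimageE)
  then show False
    using N[of n] c(3) assms(2)[of n] by fastforce
qed

section \<open>Rearrangements\<close>

definition count_below :: "nat set \<Rightarrow> nat \<Rightarrow> nat" where
  "count_below S n = card (S \<inter> {..<n})"

lemma count_below_0 [simp]: "count_below S 0 = 0"
  by (simp add: count_below_def)

lemma count_below_Suc: "count_below S (Suc n) = count_below S n + (if n \<in> S then 1 else 0)"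
  unfolding count_below_def by (simp add: lessThan_Suc Int_insert_right)

lemma count_below_add_compl: "count_below S n + count_below (- S) n = n"
  by (induction n) (auto simp: count_below_Suc)

lemma count_below_enumerate:
  assumes "infinite S"
  shows "count_below S (enumerate S j) = j"
proof -
  have "S \<inter> {..<enumerate S j} = enumerate S ` {..<j}"
  proof (intro equalityI subsetI)
    fix x
    assume x: "x \<in> S \<inter> {..<enumerate S j}"
    then obtain i where "x = enumerate S i"
      using assms range_enumerate by blast
    with x assms show "x \<in> enumerate S ` {..<j}"
      by simp
  qed (use assms in \<open>auto simp: enumerate_in_set enumerate_mono\<close>)
  then show ?thesis
    using card_image[OF inj_on_subset[OF inj_enumerate[OF assms] subset_UNIV]]
    by (simp add: count_below_def)
qed

lemma bij_betw_count_below: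
  assumes "infinite S"
  shows "bij_betw (count_below S) S UNIV"
proof (rule bij_betw_byWitness[where f' = "enumerate S"])
  show "\<forall>x\<in>S. enumerate S (count_below S x) = x"
    using assms by (metis count_below_enumerate range_enumerate rangeE)
qed (use assms in \<open>auto simp: count_below_enumerate enumerate_in_set\<close>)

definition interleave :: "nat set \<Rightarrow> (nat \<Rightarrow> 'a) \<Rightarrow> (nat \<Rightarrow> 'a) \<Rightarrow> nat \<Rightarrow> 'a" where
  "interleave S \<alpha> \<beta> n = (if n \<in> S then \<beta> (count_below S n) else \<alpha> (count_below (- S) n))"

lemma bij_interleave:
  assumes "infinite S" "infinite (- S)" "bij_betw \<alpha> UNIV A" "bij_betw \<beta> UNIV (- A)"
  shows "bij (interleave S \<alpha> \<beta>)"
proof -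
  have "bij_betw (interleave S \<alpha> \<beta>) S (- A)"
    using bij_betw_trans[OF bij_betw_count_below[OF assms(1)] assms(4)]
    by (rule bij_betw_cong[THEN iffD1, rotated]) (simp add: interleave_def)
  moreover have "bij_betw (interleave S \<alpha> \<beta>) (- S) A"
    using bij_betw_trans[OF bij_betw_count_below[OF assms(2)] assms(3)]
    by (rule bij_betw_cong[THEN iffD1, rotated]) (simp add: interleave_def)
  ultimately have "bij_betw (interleave S \<alpha> \<beta>) (S \<union> - S) (- A \<union> A)"
    by (rule bij_betw_combine) auto
  then show ?thesis
    by simp
qed

lemma sum_interleave:
  fixes a :: "'a \<Rightarrow> 'b::comm_monoid_add"
  shows "(\<Sum>i<n. a (interleave S \<alpha> \<beta> i)) =
     (\<Sum>k<count_below S n. a (\<beta> k)) + (\<Sum>k<count_below (- S) n. a (\<alpha> k))"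
  by (induction n) (auto simp: count_below_Suc interleave_def add_ac)

lemma count_below_range_strict_mono:
  assumes "strict_mono p"
  shows "count_below (range p) (p k) = k"
proof -
  have "range p \<inter> {..<p k} = p ` {..<k}"
    using assms by (auto simp: strict_mono_less)
  then show ?thesis
    using assms unfolding count_below_def by (simp add: card_image strict_mono_imp_inj_on inj_on_subset)
qed

lemma sum_interleave_range_strict_mono:
  fixes a :: "'a \<Rightarrow> 'b::comm_monoid_add"
  assumes "strict_mono p"
  shows "(\<Sum>i<p k. a (interleave (range p) \<alpha> \<beta> i)) =
     (\<Sum>j<k. a (\<beta> j)) + (\<Sum>i<p k - k. a (\<alpha> i))"
proof -
  have "count_below (- range p) (p k) = p k - k"
    using count_below_add_compl[of "range p" "p k"] count_below_range_strict_mono[OF assms, of k]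
    by simp
  then show ?thesis
    by (simp add: sum_interleave count_below_range_strict_mono[OF assms])
qed

lemma infinite_compl_range_if_gaps:
  fixes p :: "nat \<Rightarrow> nat"
  assumes gaps: "\<And>k. p k + 1 < p (Suc k)"
  shows "infinite (- range p)"
proof -
  have mono: "strict_mono p"
    unfolding strict_mono_Suc_iff by (metis gaps add_lessD1)
  have "p k + 1 \<noteq> p j" for k j
  proof
    assume "p k + 1 = p j"
    then have "p k < p j" "p j < p (Suc k)"
      using gaps[of k] by linarith+
    then show False
      using mono by (simp add: strict_mono_less)
  qed
  then have "range (\<lambda>k. p k + 1) \<subseteq> - range p"
    by auto
  moreover have "infinite (range (\<lambda>k. p k + 1))"
    using mono by (intro range_inj_infinite) (simp add: inj_def strict_mono_eq)
  ultimately show ?thesis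
    using finite_subset by blast
qed

lemma rearrangement_frequently_nonpos:
  fixes a :: "'x \<Rightarrow> real" and \<alpha> \<beta> :: "nat \<Rightarrow> 'x"
  assumes "\<epsilon> > 0" "\<forall>x\<in>A. a x < - \<epsilon>" "bij_betw \<alpha> UNIV A" "bij_betw \<beta> UNIV (- A)"
  shows "\<exists>e :: nat \<Rightarrow> 'x. bij e \<and> (\<forall>N. \<exists>n\<ge>N. (\<Sum>i<n. a (e i)) \<le> 0)"
proof -
  txt \<open>Each term of \<open>\<beta>\<close> is followed by \<open>m j\<close> terms of \<open>\<alpha>\<close>, enough to cancel it, so the
    partial sum just before the \<open>k\<close>-th term of \<open>\<beta>\<close> (at position \<open>p k\<close>) is \<open>\<le> 0\<close>.\<close>
  define m where "m j = nat \<lceil>a (\<beta> j) / \<epsilon>\<rceil> + 1" for j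
  define p where "p k = k + (\<Sum>j<k. m j)" for k
  have gaps: "p k + 1 < p (Suc k)" for k
    by (simp add: p_def m_def)
  then have "strict_mono p"
    unfolding strict_mono_Suc_iff by (metis add_lessD1)
  let ?e = "interleave (range p) \<alpha> \<beta>"
  have "infinite (range p)"
    using \<open>strict_mono p\<close> by (simp add: range_inj_infinite strict_mono_imp_inj_on)
  then have "bij ?e"
    using bij_interleave infinite_compl_range_if_gaps[of p, OF gaps] assms(3,4) by blast
  have "(\<Sum>i<p k. a (?e i)) \<le> 0" for k
  proof -
    have "a (\<beta> j) \<le> \<epsilon> * real (m j)" for j
    proof -
      have "a (\<beta> j) / \<epsilon> \<le> real (m j)"
        using real_nat_ceiling_ge[of "a (\<beta> j) / \<epsilon>"] by (simp add: m_def)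
      then show ?thesis
        using assms(1) by (simp add: field_simps)
    qed
    then have "(\<Sum>j<k. a (\<beta> j)) \<le> \<epsilon> * (\<Sum>j<k. real (m j))"
      by (simp add: sum_distrib_left sum_mono)
    moreover have "(\<Sum>i<(\<Sum>j<k. m j). a (\<alpha> i)) \<le> - \<epsilon> * (\<Sum>j<k. real (m j))"
    proof -
      have "a (\<alpha> i) \<le> - \<epsilon>" for i
        using assms(2,3) by (meson UNIV_I bij_betwE less_imp_le)
      then show ?thesis
        using sum_mono[of "{..<(\<Sum>j<k. m j)}" "\<lambda>i. a (\<alpha> i)" "\<lambda>_. - \<epsilon>"] by (simp add: mult.commute)
    qed
    ultimately show ?thesis
      unfolding sum_interleave_range_strict_mono[OF \<open>strict_mono p\<close>] by (simp add: p_def)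
  qed
  moreover have "p k \<ge> k" for k
    by (simp add: p_def)
  ultimately show ?thesis
    using \<open>bij ?e\<close> by blast
qed

lemma div_uncond_top_imp_not_neg:
  assumes "div_uncond_top (a :: 'x::countable \<Rightarrow> real)"
  shows "\<not> pos_inf_often (\<lambda>x. - a x)"
proof
  assume "pos_inf_often (\<lambda>x. - a x)"
  then obtain \<epsilon> B where \<epsilon>: "\<epsilon> > 0" "infinite B" "\<forall>x\<in>B. a x < - \<epsilon>"
    unfolding pos_inf_often_def by force
  obtain A A' where A: "A \<subseteq> B" "A' \<subseteq> B" "infinite A" "infinite A'" "A \<inter> A' = {}"
    by (rule infinite_split[OF \<epsilon>(2)])
  then have "infinite (- A)"
    using finite_subset[of A' "- A"] by blast
  have "bij_betw (from_nat_into A) UNIV A" "bij_betw (from_nat_into (- A)) UNIV (- A)"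
    using A(3) \<open>infinite (- A)\<close> by (simp_all add: bij_betw_from_nat_into)
  moreover have "\<forall>x\<in>A. a x < - \<epsilon>"
    using A(1) \<epsilon>(3) by blast
  ultimately obtain e :: "nat \<Rightarrow> 'x" where e: "bij e" "\<forall>N. \<exists>n\<ge>N. (\<Sum>i<n. a (e i)) \<le> 0"
    using rearrangement_frequently_nonpos[OF \<epsilon>(1)] by blast
  obtain N where N: "\<forall>n\<ge>N. 1 \<le> (\<Sum>i<n. a (e i))"
    using assms e(1) unfolding div_uncond_top_def filterlim_at_top eventually_sequentially by blast
  obtain n where "n \<ge> N" "(\<Sum>i<n. a (e i)) \<le> 0"
    using e(2) by blast
  moreover have "1 \<le> (\<Sum>i<n. a (e i))"
    using N \<open>n \<ge> N\<close> by blast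
  ultimately show False
    by linarith
qed

lemma uncond_sum_nonneg_imp_not_neg:
  assumes "uncond_sum_nonneg (a :: 'x::countable \<Rightarrow> real)"
  shows "\<not> pos_inf_often (\<lambda>x. - a x)"
proof
  assume neg: "pos_inf_often (\<lambda>x. - a x)"
  then obtain B :: "'x set" where "infinite B"
    unfolding pos_inf_often_def by blast
  then have "infinite (UNIV :: 'x set)"
    by (rule infinite_super[OF subset_UNIV])
  then have e: "bij (from_nat_into (UNIV :: 'x set))" (is "bij ?e")
    by (rule bij_from_nat_into_UNIV)
  from assms consider r where "conv_uncond a r" | "div_uncond_top a"
    unfolding uncond_sum_nonneg_def by blast
  then show False
  proof cases
    case 1
    then have "(\<lambda>i. a (?e i)) sums r"
      using e unfolding conv_uncond_def sums_def by blast
    then have "(\<lambda>n. a (?e n)) \<longlonglongrightarrow> 0"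
      by (intro summable_LIMSEQ_zero sums_summable)
    then have "(\<lambda>n. - a (?e n)) \<longlonglongrightarrow> 0"
      using tendsto_minus[of "\<lambda>n. a (?e n)" 0] by simp
    then show False
      using not_pos_inf_often_if_dominated[of ?e "\<lambda>x. - a x" "\<lambda>n. - a (?e n)"] e neg by simp
  next
    case 2
    then show False
      using div_uncond_top_imp_not_neg neg by blast
  qed
qed

lemma btri_diff_imp_not_neg:
  "btri_diff (a :: 'x::countable \<Rightarrow> real) \<Longrightarrow> \<not> pos_inf_often (\<lambda>x. - a x)"
  unfolding btri_diff_def using uncond_sum_nonneg_imp_not_neg by blast

lemma btri_diff_add:
  assumes "btri_diff (a :: 'x::countable \<Rightarrow> real)" "btri_diff b"
  shows "btri_diff (\<lambda>x. a x + b x)"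
proof -
  have a: "\<not> pos_inf_often (\<lambda>x. - a x)" and b: "\<not> pos_inf_often (\<lambda>x. - b x)"
    using assms btri_diff_imp_not_neg by blast+
  then have "\<not> pos_inf_often (\<lambda>x. - (a x + b x))"
    using not_pos_inf_often_add[OF a b] by simp
  moreover have "pos_inf_often (\<lambda>x. a x + b x)" if "\<not> (uncond_sum_nonneg a \<and> uncond_sum_nonneg b)"
  proof -
    have "pos_inf_often a \<or> pos_inf_often b"
      using that assms unfolding btri_diff_def by blast
    moreover have "(\<lambda>x. b x + a x) = (\<lambda>x. a x + b x)"
      by (simp add: add.commute)
    ultimately show ?thesis
      using pos_inf_often_add[OF _ b] pos_inf_often_add[of b a] a by metis
  qed
  ultimately show ?thesis
    using assms uncond_sum_nonneg_add unfolding btri_diff_def by blast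
qed

section \<open>A bounded non-convergent series\<close>

primrec greedy_walk :: "nat \<Rightarrow> real" where
  "greedy_walk 0 = 0"
| "greedy_walk (Suc j) = greedy_walk j + (if greedy_walk j < 0 then 1 else 0) - 1 / (real j + 1)"

text \<open>Even positions carry the increments of \<open>greedy_walk\<close>, odd positions its harmonic
  decrements, so \<open>greedy_walk m\<close> is the partial sum of the first \<open>2 m\<close> terms.\<close>

definition greedy_terms :: "nat \<Rightarrow> real" where
  "greedy_terms n =
     (if even n then (if greedy_walk (n div 2) < 0 then 1 else 0) else - 1 / (real (n div 2) + 1))"

lemma greedy_walk_bounded: "\<bar>greedy_walk j\<bar> \<le> 1"
proof (induction j)
  case (Suc j)
  have "0 < 1 / (real j + 1)" "1 / (real j + 1) \<le> 1"
    by (auto simp: field_simps)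
  with Suc show ?case
    unfolding greedy_walk.simps by (smt (verit))
qed simp

lemma greedy_walk_frequently_neg: "\<exists>j\<ge>N. greedy_walk j < 0"
proof (rule ccontr)
  assume "\<not> ?thesis"
  then have nonneg: "greedy_walk j \<ge> 0" if "j \<ge> N" for j
    using that by (meson not_less)
  have walk: "greedy_walk (N + k) = greedy_walk N - (\<Sum>i<k. inverse (real (i + Suc N)))" for k
  proof (induction k)
    case (Suc k)
    then show ?case
      using nonneg[of "N + k"] by (simp add: inverse_eq_divide add_ac)
  qed simp
  have "(\<Sum>i<k. inverse (real (i + Suc N))) \<le> 1" for k
    using walk[of k] nonneg[of "N + k"] greedy_walk_bounded[of N] by simp
  then have "summable (\<lambda>i. inverse (real (i + Suc N)))"
    by (intro summableI_nonneg_bounded) auto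
  then show False
    using not_summable_harmonic[where 'a = real] summable_iff_shift[of "\<lambda>n. inverse (real n)" "Suc N"]
    by simp
qed

lemma sum_greedy_terms_even: "(\<Sum>i<2 * m. greedy_terms i) = greedy_walk m"
proof (induction m)
  case (Suc m)
  have "(\<Sum>i<2 * Suc m. greedy_terms i) =
      (\<Sum>i<2 * m. greedy_terms i) + greedy_terms (2 * m) + greedy_terms (Suc (2 * m))"
    by simp
  with Suc show ?case
    by (simp add: greedy_terms_def)
qed simp

lemma greedy_terms_frequently_one: "\<exists>n\<ge>N. greedy_terms n = 1"
proof -
  obtain j where "j \<ge> N" "greedy_walk j < 0"
    using greedy_walk_frequently_neg by blast
  then show ?thesis
    by (intro exI[of _ "2 * j"]) (simp add: greedy_terms_def)
qed

lemma not_uncond_sum_nonneg_greedy_terms: "\<not> uncond_sum_nonneg greedy_terms"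
proof -
  have "\<not> greedy_terms \<longlonglongrightarrow> 0"
  proof
    assume "greedy_terms \<longlonglongrightarrow> 0"
    then have "eventually (\<lambda>n. greedy_terms n < 1) sequentially"
      by (rule order_tendstoD) simp
    then obtain N where "\<forall>n\<ge>N. greedy_terms n < 1"
      unfolding eventually_sequentially by blast
    moreover obtain n where "n \<ge> N" "greedy_terms n = 1"
      using greedy_terms_frequently_one by blast
    ultimately show False
      by (metis less_irrefl)
  qed
  moreover have "greedy_terms \<longlonglongrightarrow> 0" if "conv_uncond greedy_terms r" for r
  proof -
    have "(\<lambda>n. \<Sum>i<n. greedy_terms (id i)) \<longlonglongrightarrow> r"
      using that bij_id unfolding conv_uncond_def by blast
    then have "greedy_terms sums r"
      by (simp add: sums_def)
    then show ?thesis
      by (intro summable_LIMSEQ_zero sums_summable)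
  qed
  moreover have "\<not> div_uncond_top greedy_terms"
  proof
    assume "div_uncond_top greedy_terms"
    then have "filterlim (\<lambda>n. \<Sum>i<n. greedy_terms (id i)) at_top sequentially"
      using bij_id unfolding div_uncond_top_def by blast
    then obtain N where "\<forall>n\<ge>N. 2 \<le> (\<Sum>i<n. greedy_terms i)"
      unfolding filterlim_at_top eventually_sequentially by auto
    then have "2 \<le> (\<Sum>i<2 * N. greedy_terms i)"
      by (metis mult_2 le_add1)
    then have "2 \<le> greedy_walk N"
      by (simp add: sum_greedy_terms_even)
    then show False
      using greedy_walk_bounded[of N] by simp
  qed
  ultimately show ?thesis
    unfolding uncond_sum_nonneg_def by blast
qed

lemma pos_inf_often_greedy_terms: "pos_inf_often greedy_terms"
proof -
  have "infinite {n. greedy_terms n = 1}"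
    using greedy_terms_frequently_one by (simp add: infinite_nat_iff_unbounded_le)
  then show ?thesis
    unfolding pos_inf_often_def by (intro exI[of _ "1/2"] exI[of _ "{n. greedy_terms n = 1}"]) auto
qed

lemma not_neg_greedy_terms: "\<not> pos_inf_often (\<lambda>n. - greedy_terms n)"
proof (rule not_pos_inf_often_if_dominated[of id _ "\<lambda>n. 2 * inverse (real (Suc n))"])
  fix n
  have "0 \<le> 2 * inverse (real (Suc n))"
    by simp
  show "- greedy_terms (id n) \<le> 2 * inverse (real (Suc n))"
  proof (cases "even n")
    case True
    then have "- greedy_terms n \<le> 0"
      by (simp add: greedy_terms_def)
    with \<open>0 \<le> 2 * inverse (real (Suc n))\<close> show ?thesis
      unfolding id_apply by linarith
  next
    case False
    have "n \<le> 2 * (n div 2) + (1 :: nat)"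
      by presburger
    then have "real n \<le> real (2 * (n div 2) + 1)"
      by (simp only: of_nat_le_iff)
    then have "1 / (real (n div 2) + 1) \<le> 2 * inverse (real (Suc n))"
      by (simp add: divide_simps)
    moreover have "- greedy_terms n = 1 / (real (n div 2) + 1)"
      using False by (simp add: greedy_terms_def)
    ultimately show ?thesis
      unfolding id_apply by linarith
  qed
next
  show "bij (id :: nat \<Rightarrow> nat)"
    by simp
  show "(\<lambda>n. 2 * inverse (real (Suc n))) \<longlonglongrightarrow> 0"
    by (rule tendsto_mult_right_zero[OF LIMSEQ_inverse_real_of_nat])
qed

lemma ex_btri_not_sum_preorder:
  assumes "infinite (UNIV :: 'x::countable set)"
  shows "\<exists>w v :: 'x \<Rightarrow> real. btri w v \<and> \<not> sum_preorder w v"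
proof -
  let ?e = "from_nat_into (UNIV :: 'x set)"
  have e: "bij ?e"
    using assms by (rule bij_from_nat_into_UNIV)
  define d where "d = greedy_terms \<circ> inv ?e"
  have "btri_diff greedy_terms"
    unfolding btri_diff_def using pos_inf_often_greedy_terms not_neg_greedy_terms by blast
  then have "btri_diff d"
    unfolding d_def using btri_diff_comp_bij bij_imp_bij_inv[OF e] by blast
  moreover have "\<not> uncond_sum_nonneg d"
  proof
    assume "uncond_sum_nonneg d"
    then have "uncond_sum_nonneg (d \<circ> ?e)"
      using uncond_sum_nonneg_comp_bij e by blast
    moreover have "d \<circ> ?e = greedy_terms"
      using e by (simp add: d_def comp_assoc bij_is_inj)
    ultimately show False
      using not_uncond_sum_nonneg_greedy_terms by simp
  qed
  ultimately have "btri d (\<lambda>x. 0) \<and> \<not> sum_preorder d (\<lambda>x. 0)"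
    by (simp add: btri_iff_diff sum_preorder_iff_diff)
  then show ?thesis
    by blast
qed

lemma is_preorder_btri: "is_preorder (btri :: ('x::countable \<Rightarrow> real) \<Rightarrow> ('x \<Rightarrow> real) \<Rightarrow> bool)"
  unfolding is_preorder_def
proof (intro conjI allI impI)
  fix w :: "'x \<Rightarrow> real"
  show "btri w w"
    using uncond_sum_nonneg_zero by (simp add: btri_iff_diff btri_diff_def)
next
  fix u v w :: "'x \<Rightarrow> real"
  assume "btri u v" "btri v w"
  then have "btri_diff (\<lambda>x. (u x - v x) + (v x - w x))"
    by (intro btri_diff_add) (simp_all add: btri_iff_diff)
  then show "btri u w"
    by (simp add: btri_iff_diff)
qed

lemma strong_pareto_btri:
  assumes "infinite (UNIV :: 'x::countable set)"
  shows "strong_pareto (btri :: ('x \<Rightarrow> real) \<Rightarrow> ('x \<Rightarrow> real) \<Rightarrow> bool)"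
  unfolding strong_pareto_def strict_of_def
proof (intro allI impI conjI)
  fix w v :: "'x \<Rightarrow> real"
  assume dom: "(\<forall>x. v x \<le> w x) \<and> (\<exists>x. v x < w x)"
  then show "btri w v"
    using uncond_sum_nonneg_of_nonneg[of "\<lambda>x. w x - v x"] by (simp add: btri_iff_diff btri_diff_def)
  obtain x\<^sub>0 where "v x\<^sub>0 < w x\<^sub>0"
    using dom by blast
  then have "\<not> uncond_sum_nonneg (\<lambda>x. v x - w x)"
    using not_uncond_sum_nonneg_of_nonpos[OF assms, of "\<lambda>x. v x - w x" x\<^sub>0] dom by simp
  moreover have "\<not> pos_inf_often (\<lambda>x. v x - w x)"
  proof
    assume "pos_inf_often (\<lambda>x. v x - w x)"
    then obtain c A where "c > 0" "infinite A" "\<forall>x\<in>A. v x - w x > c"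
      unfolding pos_inf_often_def by blast
    then obtain x where "v x - w x > c"
      by (metis finite.emptyI ex_in_conv)
    with \<open>c > 0\<close> dom show False
      by (meson diff_le_0_iff_le less_trans not_le)
  qed
  ultimately show "\<not> btri v w"
    by (simp add: btri_iff_diff btri_diff_def)
qed

lemma permutation_invariance_btri: "permutation_invariance btri"
  unfolding permutation_invariance_def
proof (intro allI impI)
  fix w v :: "'x \<Rightarrow> real" and \<pi> :: "'x \<Rightarrow> 'x"
  assume "bij \<pi>"
  have "(\<lambda>x. (w \<circ> \<pi>) x - (v \<circ> \<pi>) x) = (\<lambda>x. w x - v x) \<circ> \<pi>"
    by auto
  then show "btri w v \<longleftrightarrow> btri (w \<circ> \<pi>) (v \<circ> \<pi>)"
    using btri_diff_comp_bij_iff[OF \<open>bij \<pi>\<close>] by (simp add: btri_iff_diff)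
qed

lemma quasi_independence_btri: "quasi_independence btri"
  unfolding quasi_independence_def
proof (intro allI impI)
  fix w v u :: "'x \<Rightarrow> real" and \<alpha> :: real
  assume "btri w v" "0 \<le> \<alpha> \<and> \<alpha> \<le> 1"
  then have "btri_diff (\<lambda>x. \<alpha> * (w x - v x))"
    using btri_diff_scale[of \<alpha> "\<lambda>x. w x - v x"] by (simp add: btri_iff_diff)
  moreover have "(\<lambda>x. (\<alpha> * w x + (1 - \<alpha>) * u x) - (\<alpha> * v x + (1 - \<alpha>) * u x)) = (\<lambda>x. \<alpha> * (w x - v x))"
    by (simp add: algebra_simps)
  ultimately show "btri (\<lambda>x. \<alpha> * w x + (1 - \<alpha>) * u x) (\<lambda>x. \<alpha> * v x + (1 - \<alpha>) * u x)"
    by (simp add: btri_iff_diff)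
qed

lemma weakly_extends_btri_sum_preorder: "weakly_extends btri sum_preorder"
  unfolding weakly_extends_def btri_def by blast

theorem proposition3:
  assumes "infinite (UNIV :: 'x::countable set)"
  shows "(is_preorder (btri :: ('x \<Rightarrow> real) \<Rightarrow> ('x \<Rightarrow> real) \<Rightarrow> bool)
           \<and> strong_pareto (btri :: ('x \<Rightarrow> real) \<Rightarrow> ('x \<Rightarrow> real) \<Rightarrow> bool)
           \<and> permutation_invariance (btri :: ('x \<Rightarrow> real) \<Rightarrow> ('x \<Rightarrow> real) \<Rightarrow> bool)
           \<and> quasi_independence (btri :: ('x \<Rightarrow> real) \<Rightarrow> ('x \<Rightarrow> real) \<Rightarrow> bool))
         \<and> (weakly_extends (btri :: ('x \<Rightarrow> real) \<Rightarrow> ('x \<Rightarrow> real) \<Rightarrow> bool) sum_preorder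
           \<and> (\<exists>w v :: 'x \<Rightarrow> real. btri w v \<and> \<not> sum_preorder w v))"
  using is_preorder_btri strong_pareto_btri[OF assms] permutation_invariance_btri
    quasi_independence_btri weakly_extends_btri_sum_preorder ex_btri_not_sum_preorder[OF assms]
  by blast

end
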